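(* For $\mathbf{z}\in\mathrm{GT}_n^{\le m}$ and $M=\Phi(\mathbf{z})$, the decoration satisfies $F(\mathbf{z})=\sum_{k=1}^{\min(m-1,n-1)}\frac{\Delta_{\{k\}\cup[k+2,n],[1,n-k]}(M)+\Delta_{[k+1,n],[1,n-k-1]\cup\{n-k+1\}}(M)}{\Delta_{[k+1,n],[1,n-k]}(M)}+\mathbb{1}_{m<n}\Big(\frac{\Delta_{\{m\}\cup[m+2,n],[1,n-m]}(M)}{\Delta_{[m+1,n],[1,n-m]}(M)}+\sum_{j=1}^{n-m}\frac{\Delta_{[m+1,m+j],[1,j-1]\cup\{j+1\}}(M)}{\Delta_{[m+1,m+j],[1,j]}(M)}\Big).$
   Context: $\mathrm{GT}_n^{\le m}$ is the torus of arrays $\mathbf{z}=(z_{i,j})$, $z_{i,j}\in\mathbb{C}^*$, $1\le i\le m$, $i\le j\le n$; $p=\min(m,n)$. $E_{a,b}$ is a matrix unit; $W^i(y_i,\dots,y_n)=\sum_{k<i}E_{kk}+\sum_{k\ge i}y_kE_{kk}+\sum_{k=i}^{n-1}E_{k+1,k}$ ($n\times n$); $\Phi(\mathbf{z})=W^p(z_{p,p},\frac{z_{p,p+1}}{z_{p,p}},\dots,\frac{z_{p,n}}{z_{p,n-1}})\cdots W^1(z_{1,1},\frac{z_{1,2}}{z_{1,1}},\dots,\frac{z_{1,n}}{z_{1,n-1}})$. $\Delta_{I,J}(M)$ denotes the minor with rows $I$ and columns $J$; $\mathbb{1}_{m<n}$ is the indicator of $m<n$. The decoration is $F(\mathbf{z})=\sum_{1\le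 i\le m,\,i\le j\le n-1}\frac{z_{i,j+1}}{z_{i,j}}+\sum_{1\le i\le m-1,\,i\le j\le n-1}\frac{z_{i,j}}{z_{i+1,j+1}}+\mathbb{1}_{m<n}z_{m,m}$. *)

theory Defs
  imports Complex_Main "Jordan_Normal_Form.Determinant" "Jordan_Normal_Form.DL_Submatrix"
begin

text \<open>All indices below are 1-based as in the paper; JNF matrices are 0-based,
  so entry (a,b) of the paper is entry (a-1,b-1) of the JNF matrix.\<close>

text \<open>Matrix unit-based matrix W^i(y_i,...,y_n) (n x n); y is given as a function
  of the (1-based) index k, only y k for i \<le> k \<le> n is used.\<close>
definition Wmat :: "nat \<Rightarrow> nat \<Rightarrow> (nat \<Rightarrow> complex) \<Rightarrow> complex mat" where
  "Wmat n i y = mat n n (\<lambda>(a, b). let r = a + 1; c = b + 1 in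
      if r = c then (if r < i then 1 else y r)
      else if r = c + 1 \<and> i \<le> c \<and> c \<le> n - 1 then 1 else 0)"

definition Wargs :: "(nat \<Rightarrow> nat \<Rightarrow> complex) \<Rightarrow> nat \<Rightarrow> nat \<Rightarrow> complex" where
  "Wargs z i k = (if k = i then z i i else z i k / z i (k - 1))"

fun PhiAux :: "nat \<Rightarrow> (nat \<Rightarrow> nat \<Rightarrow> complex) \<Rightarrow> nat \<Rightarrow> complex mat" where
  "PhiAux n z 0 = 1\<^sub>m n"
| "PhiAux n z (Suc i) = Wmat n (Suc i) (Wargs z (Suc i)) * PhiAux n z i"

definition Phi :: "nat \<Rightarrow> nat \<Rightarrow> (nat \<Rightarrow> nat \<Rightarrow> complex) \<Rightarrow> complex mat" where
  "Phi m n z = PhiAux n z (min m n)"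

text \<open>The torus GT_n^{\<le>m}: arrays z_{i,j}, 1 \<le> i \<le> m, i \<le> j \<le> n, of nonzero numbers
  (values of z outside this index range are irrelevant).\<close>
definition in_GT :: "nat \<Rightarrow> nat \<Rightarrow> (nat \<Rightarrow> nat \<Rightarrow> complex) \<Rightarrow> bool" where
  "in_GT m n z \<longleftrightarrow> (\<forall>i j. 1 \<le> i \<and> i \<le> m \<and> i \<le> j \<and> j \<le> n \<longrightarrow> z i j \<noteq> 0)"

definition minor :: "complex mat \<Rightarrow> nat set \<Rightarrow> nat set \<Rightarrow> complex" where
  "minor M I J = det (submatrix M ((\<lambda>x. x - 1) ` I) ((\<lambda>x. x - 1) ` J))"

definition decoration :: "nat \<Rightarrow> nat \<Rightarrow> (nat \<Rightarrow> nat \<Rightarrow> complex) \<Rightarrow> complex" where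
  "decoration m n z =
     (\<Sum>i = 1..m. \<Sum>j = i..n - 1. z i (j + 1) / z i j)
   + (\<Sum>i = 1..m - 1. \<Sum>j = i..n - 1. z i j / z (i + 1) (j + 1))
   + (if m < n then z m m else 0)"

end

theory Submission
  imports Defs
begin

text \<open>
  Splitting off the rightmost factor gives \<open>\<Phi>(z) = diag(1, \<Phi>(z')) W\<^sup>1\<close>, where \<open>z'\<close> is the
  array without its first row and column. Below the first row, column \<open>b\<close> of \<open>\<Phi>(z)\<close> is
  column \<open>b\<close> of \<open>\<Phi>(z')\<close> plus a multiple of column \<open>b - 1\<close>, so left-justified minors
  avoiding the first row reduce to minors of \<open>\<Phi>(z')\<close>. Peeling in this way, the solid
  minor \<open>\<Delta>\<^bsub>[k+1,n],[1,n-k]\<^esub>\<close> becomes \<open>det \<Phi>\<close> of a shifted array, i.e.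
  \<open>\<Prod>\<^bsub>i>k\<^esub> z\<^bsub>i,n\<^esub>\<close>, and moving its last column one step to the right multiplies it by
  \<open>\<Sum>\<^bsub>t\<le>k\<^esub> z\<^bsub>t,t+n-k\<^esub>/z\<^bsub>t,t+n-k-1\<^esub>\<close>, one term per peeling step. For the minor skipping
  row \<open>k+1\<close>, after peeling down to row \<open>k\<close> the first row is \<open>(z\<^bsub>k,k\<^esub>, 0, \<dots>, 0)\<close>; the
  factors \<open>W\<^sup>i\<close>, \<open>i > k+1\<close>, contribute \<open>\<Prod> z\<^bsub>i,n\<^esub>\<close> and the multilinear expansion of the
  remaining \<open>W\<^sup>2 W\<^sup>1\<close> gives \<open>\<Sum>\<^sub>s z\<^bsub>k,k+s\<^esub>/z\<^bsub>k+1,k+s+1\<^esub>\<close>. Grouping the first double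
  sum of \<open>F\<close> along diagonals matches the resulting ratios term by term.
\<close>

section \<open>Determinants of matrices given by entry functions\<close>

lemma det_mat_sum_prod:
  "det (mat k k (\<lambda>(i, j). \<Sum>t<k. X i t * Y t j))
   = det (mat k k (\<lambda>(i, j). X i j)) * det (mat k k (\<lambda>(i, j). Y i j :: 'a :: comm_ring_1))"
proof -
  have "mat k k (\<lambda>(i, j). \<Sum>t<k. X i t * Y t j) = mat k k (\<lambda>(i, j). X i j) * mat k k (\<lambda>(i, j). Y i j)"
    by (rule eq_matI) (auto simp: scalar_prod_def lessThan_atLeast0 intro!: sum.cong)
  then show ?thesis
    by (simp add: det_mult[of _ k])
qed

lemma prod_list_diag_mat:
  "prod_list (diag_mat (mat k k (\<lambda>(i, j). f i j))) = (\<Prod>i<k. f i i)"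
proof -
  have "prod_list (map g [0..<k]) = (\<Prod>i<k. g i)" for g :: "nat \<Rightarrow> 'a"
    by (induct k) (auto simp: lessThan_Suc mult.commute)
  then show ?thesis
    unfolding diag_mat_def by (auto intro: prod.cong)
qed

lemma det_mat_lower_triangular:
  assumes "\<And>i j. i < j \<Longrightarrow> j < k \<Longrightarrow> f i j = (0 :: 'a :: comm_ring_1)"
  shows "det (mat k k (\<lambda>(i, j). f i j)) = (\<Prod>i<k. f i i)"
  using det_lower_triangular[of k "mat k k (\<lambda>(i, j). f i j)"] assms
  by (simp add: prod_list_diag_mat)

lemma det_mat_upper_triangular:
  assumes "\<And>i j. j < i \<Longrightarrow> i < k \<Longrightarrow> f i j = (0 :: 'a :: comm_ring_1)"
  shows "det (mat k k (\<lambda>(i, j). f i j)) = (\<Prod>i<k. f i i)"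
  using det_upper_triangular[of "mat k k (\<lambda>(i, j). f i j)" k] assms
  by (simp add: prod_list_diag_mat upper_triangular_def)

lemma det_mat_cong:
  assumes "\<And>i j. i < k \<Longrightarrow> j < k \<Longrightarrow> f i j = g i j"
  shows "det (mat k k (\<lambda>(i, j). f i j)) = det (mat k k (\<lambda>(i, j). g i j))"
  using assms by (intro arg_cong[where f = det] eq_matI) auto

lemma det_mat_identical_columns:
  assumes "q1 \<noteq> q2" "q1 < k" "q2 < k" "\<And>i. i < k \<Longrightarrow> f i q1 = f i q2"
  shows "det (mat k k (\<lambda>(i, j). f i j)) = (0 :: 'a :: comm_ring_1)"
  by (rule det_identical_columns[of _ k q1 q2]) (use assms in \<open>auto intro!: eq_vecI\<close>)

lemma det_mat_linear_column:
  assumes q: "q < k"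
  shows "det (mat k k (\<lambda>(i, j). if j = q then a * u i + b * v i else X i j))
    = a * det (mat k k (\<lambda>(i, j). if j = q then u i else X i j))
    + b * det (mat k k (\<lambda>(i, j). if j = q then v i else X i j :: 'a :: comm_ring_1))"
proof -
  let ?A = "\<lambda>w. mat k k (\<lambda>(i, j). if j = q then w i else X i j)"
  have cofactor_eq: "cofactor (?A w) i q = cofactor (?A u) i q" if "i < k" for w i
  proof -
    have "mat_delete (?A w) i q = mat_delete (?A u) i q"
      unfolding mat_delete_def using q that by (intro eq_matI) auto
    then show ?thesis
      unfolding cofactor_def by simp
  qed
  have expand: "det (?A w) = (\<Sum>i<k. w i * cofactor (?A u) i q)" for w
    by (subst laplace_expansion_column[OF _ q]) (auto simp: q cofactor_eq[where w = w] intro!: sum.cong)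
  show ?thesis
    unfolding expand[of "\<lambda>i. a * u i + b * v i", simplified] expand[of u] expand[of v]
    by (simp add: distrib_right sum.distrib sum_distrib_left mult.assoc)
qed

lemma det_mat_zero_column:
  assumes "q < k" "\<And>i. i < k \<Longrightarrow> f i q = 0"
  shows "det (mat k k (\<lambda>(i, j). f i j)) = (0 :: 'a :: comm_ring_1)"
proof -
  have "det (mat k k (\<lambda>(i, j). f i j))
      = det (mat k k (\<lambda>(i, j). if j = q then 0 * f i q + 0 * f i q else f i j))"
    using assms by (intro det_mat_cong) auto
  then show ?thesis
    by (simp only: det_mat_linear_column[OF assms(1)]) simp
qed

lemma sum_delta_Suc:
  "(\<Sum>t<N. if Suc t = b then f t else 0) = (if 0 < b \<and> b - 1 < N then f (b - 1) else (0 :: 'a :: comm_monoid_add))"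
  by (cases b) (auto simp: sum.delta)

text \<open>The column operations amount to right multiplication by a unitriangular matrix.\<close>
lemma det_mat_add_prev_columns:
  "det (mat K K (\<lambda>(i, j). if 0 < j \<and> j < L then X i j + y j * X i (j - 1) else X i j))
   = det (mat K K (\<lambda>(i, j). X i j :: 'a :: comm_ring_1))"
proof -
  let ?T = "\<lambda>t j. (if t = j then 1 else 0) + (if Suc t = j then (if j < L then y j else 0) else 0)"
  have entry: "(\<Sum>t<K. X i t * ?T t j) = (if 0 < j \<and> j < L then X i j + y j * X i (j - 1) else X i j)"
    if "j < K" for i j
  proof -
    have "(\<Sum>t<K. X i t * ?T t j)
        = (\<Sum>t<K. if t = j then X i t else 0)
          + (\<Sum>t<K. if Suc t = j then (if j < L then y j * X i t else 0) else 0)"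
      unfolding sum.distrib[symmetric] by (intro sum.cong refl) auto
    also have "\<dots> = (if 0 < j \<and> j < L then X i j + y j * X i (j - 1) else X i j)"
      using that by (simp only: sum.delta' sum_delta_Suc) auto
    finally show ?thesis .
  qed
  have "det (mat K K (\<lambda>(i, j). if 0 < j \<and> j < L then X i j + y j * X i (j - 1) else X i j))
      = det (mat K K (\<lambda>(i, j). \<Sum>t<K. X i t * ?T t j))"
    by (rule det_mat_cong) (simp add: entry)
  also have "\<dots> = det (mat K K (\<lambda>(i, j). X i j)) * det (mat K K (\<lambda>(i, j). ?T i j))"
    by (rule det_mat_sum_prod)
  also have "det (mat K K (\<lambda>(i, j). ?T i j)) = 1"
    by (subst det_mat_upper_triangular) auto
  finally show ?thesis by simp
qed

lemma sum_bidiagonal_coeffs_Suc: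
  fixes \<alpha> \<beta> :: "nat \<Rightarrow> 'a :: comm_semiring_1"
  shows "(\<Sum>s\<le>Suc L. ((\<Prod>j<s. \<alpha> j) * (\<Prod>j\<in>{s..<Suc L}. \<beta> j)) * D s)
    = \<alpha> L * ((\<Prod>j<L. \<alpha> j) * D (Suc L))
      + \<beta> L * (\<Sum>s\<le>L. ((\<Prod>j<s. \<alpha> j) * (\<Prod>j\<in>{s..<L}. \<beta> j)) * D s)"
proof -
  have "(\<Sum>s\<le>L. ((\<Prod>j<s. \<alpha> j) * (\<Prod>j\<in>{s..<Suc L}. \<beta> j)) * D s)
      = (\<Sum>s\<le>L. \<beta> L * (((\<Prod>j<s. \<alpha> j) * (\<Prod>j\<in>{s..<L}. \<beta> j)) * D s))"
    by (rule sum.cong) (simp_all add: prod.atLeastLessThan_Suc mult_ac)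
  then show ?thesis
    by (simp add: sum_distrib_left lessThan_Suc ac_simps)
qed

text \<open>In the multilinear expansion a term survives only if it uses the columns
  \<open>X\<^sub>0, \<dots>, X\<^sub>L\<close> with one index \<open>s\<close> omitted; any other choice repeats a column.\<close>
lemma det_mat_adjacent_column_combination:
  assumes "L \<le> K"
  shows "det (mat K K (\<lambda>(i, j). if j < L then \<alpha> j * X i j + \<beta> j * X i (Suc j) else Y i j))
    = (\<Sum>s\<le>L. ((\<Prod>j<s. \<alpha> j) * (\<Prod>j\<in>{s..<L}. \<beta> j))
        * det (mat K K (\<lambda>(i, j). if j < L then X i (if j < s then j else Suc j)
                                  else Y i j :: 'a :: comm_ring_1)))"
  using assms
proof (induct L arbitrary: Y)
  case 0
  then show ?case by simp
next
  case (Suc L)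
  have L: "L < K" using Suc.prems by simp
  let ?A = "\<lambda>Y'. det (mat K K (\<lambda>(i, j). if j < L then \<alpha> j * X i j + \<beta> j * X i (Suc j) else Y' i j))"
  let ?D = "\<lambda>s. det (mat K K (\<lambda>(i, j). if j < Suc L then X i (if j < s then j else Suc j) else Y i j))"
  let ?c = "\<lambda>s. (\<Prod>j<s. \<alpha> j) * (\<Prod>j\<in>{s..<L}. \<beta> j)"
  define Y1 where "Y1 i j = (if j = L then X i L else Y i j)" for i j
  define Y2 where "Y2 i j = (if j = L then X i (Suc L) else Y i j)" for i j
  have "det (mat K K (\<lambda>(i, j). if j < Suc L then \<alpha> j * X i j + \<beta> j * X i (Suc j) else Y i j))
      = det (mat K K (\<lambda>(i, j). if j = L then \<alpha> L * X i L + \<beta> L * X i (Suc L)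
               else if j < L then \<alpha> j * X i j + \<beta> j * X i (Suc j) else Y i j))"
    by (rule det_mat_cong) auto
  also have "\<dots> = \<alpha> L * ?A Y1 + \<beta> L * ?A Y2"
    unfolding det_mat_linear_column[OF L] Y1_def Y2_def
    by (intro arg_cong2[where f = "(+)"] arg_cong2[where f = "(*)"] refl det_mat_cong) auto
  also have "?A Y1 = ?c L * ?D (Suc L)"
  proof -
    have repeated: "det (mat K K (\<lambda>(i, j). if j < L then X i (if j < s then j else Suc j) else Y1 i j)) = 0"
      if "s < L" for s
      by (rule det_mat_identical_columns[of "L - 1" L]) (use that L in \<open>auto simp: Y1_def\<close>)
    have "?A Y1 = (\<Sum>s\<le>L. ?c s * det (mat K K (\<lambda>(i, j). if j < L then X i (if j < s then j else Suc j) else Y1 i j)))"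
      using Suc.hyps L by simp
    also have "\<dots> = ?c L * det (mat K K (\<lambda>(i, j). if j < L then X i (if j < L then j else Suc j) else Y1 i j))"
      by (subst sum.remove[of _ L]) (auto simp: repeated intro!: sum.neutral)
    also have "det (mat K K (\<lambda>(i, j). if j < L then X i (if j < L then j else Suc j) else Y1 i j)) = ?D (Suc L)"
      by (rule det_mat_cong) (auto simp: Y1_def less_Suc_eq)
    finally show ?thesis .
  qed
  also have "?A Y2 = (\<Sum>s\<le>L. ?c s * ?D s)"
    using Suc.hyps L
    by (simp, intro sum.cong refl arg_cong2[where f = "(*)"] det_mat_cong) (auto simp: Y2_def less_Suc_eq)
  finally show ?case
    unfolding sum_bidiagonal_coeffs_Suc by simp
qed

lemma det_mat_first_row_single:
  assumes "\<And>j. j < Suc k \<Longrightarrow> f 0 j = (if j = 0 then d else 0)"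
  shows "det (mat (Suc k) (Suc k) (\<lambda>(i, j). f i j))
       = d * det (mat k k (\<lambda>(i, j). f (Suc i) (Suc j) :: 'a :: comm_ring_1))"
proof -
  let ?A = "mat (Suc k) (Suc k) (\<lambda>(i, j). f i j)"
  have "det ?A = (\<Sum>j<Suc k. ?A $$ (0, j) * cofactor ?A 0 j)"
    by (rule laplace_expansion_row) auto
  also have "\<dots> = (\<Sum>j<Suc k. if j = 0 then d * cofactor ?A 0 0 else 0)"
    using assms by (intro sum.cong) auto
  also have "mat_delete ?A 0 0 = mat k k (\<lambda>(i, j). f (Suc i) (Suc j))"
    unfolding mat_delete_def by (intro eq_matI) auto
  then have "cofactor ?A 0 0 = det (mat k k (\<lambda>(i, j). f (Suc i) (Suc j)))"
    by (simp add: cofactor_def)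
  finally show ?thesis
    by (simp add: sum.delta')
qed

lemma det_mat_bidiagonal_blocks:
  "det (mat L L (\<lambda>(i, j).
      if j < s then (if i = j then 1 else if Suc i = j then g i else 0)
      else (if i = j then e i else if i = Suc j then 1 else 0)))
    = (\<Prod>j<L. if j < s then 1 else e j :: 'a :: comm_ring_1)"
proof -
  let ?X = "\<lambda>i j. if j < s then (if i = j then 1 else 0)
                  else (if i = j then e i else if i = Suc j then 1 else (0 :: 'a))"
  have "det (mat L L (\<lambda>(i, j).
      if j < s then (if i = j then 1 else if Suc i = j then g i else 0)
      else (if i = j then e i else if i = Suc j then 1 else 0)))
    = det (mat L L (\<lambda>(i, j). if 0 < j \<and> j < s then ?X i j + g (j - 1) * ?X i (j - 1) else ?X i j))"
    by (rule det_mat_cong) auto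
  also have "\<dots> = det (mat L L (\<lambda>(i, j). ?X i j))"
    by (rule det_mat_add_prev_columns)
  also have "\<dots> = (\<Prod>j<L. if j < s then 1 else e j)"
    by (subst det_mat_lower_triangular) (auto intro!: prod.cong)
  finally show ?thesis .
qed

section \<open>Minors along strictly increasing index maps\<close>

definition subdet :: "'a :: comm_ring_1 mat \<Rightarrow> nat \<Rightarrow> (nat \<Rightarrow> nat) \<Rightarrow> (nat \<Rightarrow> nat) \<Rightarrow> 'a" where
  "subdet M k r c = det (mat k k (\<lambda>(i, j). M $$ (r i, c j)))"

lemma subdet_full: "M \<in> carrier_mat K K \<Longrightarrow> subdet M K (\<lambda>i. i) (\<lambda>j. j) = det M"
  unfolding subdet_def by (intro arg_cong[where f = det] eq_matI) auto

lemma pick_strict_mono_image: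
  assumes mono: "\<And>i j. i < j \<Longrightarrow> j < k \<Longrightarrow> r i < r j" and i: "i < k"
  shows "pick (r ` {..<k}) i = r i"
proof -
  have "j < i" if "j < k" "r j < r i" for j
    using mono[of i j] mono[of j i] that i by (cases i j rule: linorder_cases) auto
  then have "{a \<in> r ` {..<k}. a < r i} = r ` {..<i}"
    using mono i by auto
  moreover have "inj_on r {..<i}"
    by (rule inj_onI) (metis lessThan_iff linorder_neqE_nat mono i order.strict_trans less_irrefl)
  ultimately have "card {a \<in> r ` {..<k}. a < r i} = i"
    by (simp add: card_image)
  then show ?thesis
    using pick_card_in_set[of "r i" "r ` {..<k}"] i by simp
qed

lemma minor_eq_subdet:
  assumes M: "M \<in> carrier_mat n n"
    and r: "\<And>i j. i < j \<Longrightarrow> j < k \<Longrightarrow> r i < r j" "\<And>i. i < k \<Longrightarrow> r i < n"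
    and c: "\<And>i j. i < j \<Longrightarrow> j < k \<Longrightarrow> c i < c j" "\<And>j. j < k \<Longrightarrow> c j < n"
    and I: "(\<lambda>x. x - 1) ` I = r ` {..<k}" and J: "(\<lambda>x. x - 1) ` J = c ` {..<k}"
  shows "minor M I J = subdet M k r c"
proof -
  have card_image_bounded: "card {i. i < n \<and> i \<in> f ` {..<k}} = k"
    if "\<And>i j. i < j \<Longrightarrow> j < k \<Longrightarrow> f i < f j" "\<And>i. i < k \<Longrightarrow> f i < n" for f
  proof -
    have "inj_on f {..<k}"
      by (rule inj_onI) (metis lessThan_iff linorder_neqE_nat that(1) less_irrefl)
    moreover have "{i. i < n \<and> i \<in> f ` {..<k}} = f ` {..<k}"
      using that(2) by auto
    ultimately show ?thesis
      by (simp add: card_image)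
  qed
  have "submatrix M (r ` {..<k}) (c ` {..<k}) = mat k k (\<lambda>(i, j). M $$ (r i, c j))"
    using M card_image_bounded[OF r] card_image_bounded[OF c]
    by (intro eq_matI) (auto simp: submatrix_def pick_strict_mono_image r c)
  then show ?thesis
    unfolding minor_def subdet_def I J by simp
qed

section \<open>The recursive structure of \<open>\<Phi>\<close>\<close>

definition shift_array :: "nat \<Rightarrow> (nat \<Rightarrow> nat \<Rightarrow> 'a) \<Rightarrow> nat \<Rightarrow> nat \<Rightarrow> 'a" where
  "shift_array a z i j = z (a + i) (a + j)"

lemma shift_array_0 [simp]: "shift_array 0 z = z"
  by (simp add: shift_array_def fun_eq_iff)

lemma shift_array_shift_array [simp]: "shift_array a (shift_array b z) = shift_array (b + a) z"
  by (simp add: shift_array_def fun_eq_iff add.assoc)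

lemma in_GT_shift_array:
  assumes "in_GT q N z"
  shows "in_GT (q - a) (N - a) (shift_array a z)"
  unfolding in_GT_def shift_array_def
proof (intro allI impI)
  fix i j assume "1 \<le> i \<and> i \<le> q - a \<and> i \<le> j \<and> j \<le> N - a"
  then have "1 \<le> a + i" "a + i \<le> q" "a + i \<le> a + j" "a + j \<le> N"
    by auto
  then show "z (a + i) (a + j) \<noteq> 0"
    using assms unfolding in_GT_def by blast
qed

lemma in_GT_mono: "in_GT q N z \<Longrightarrow> q' \<le> q \<Longrightarrow> N' \<le> N \<Longrightarrow> in_GT q' N' z"
  unfolding in_GT_def by (meson order.trans)

definition block_diag_one :: "'a :: {zero, one} mat \<Rightarrow> 'a mat" where
  "block_diag_one B = mat (Suc (dim_row B)) (Suc (dim_col B))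
     (\<lambda>(i, j). if i = 0 then (if j = 0 then 1 else 0) else if j = 0 then 0 else B $$ (i - 1, j - 1))"

lemma block_diag_one_dim [simp]:
  "dim_row (block_diag_one B) = Suc (dim_row B)" "dim_col (block_diag_one B) = Suc (dim_col B)"
  by (simp_all add: block_diag_one_def)

lemma block_diag_one_carrier [simp]: "B \<in> carrier_mat N N \<Longrightarrow> block_diag_one B \<in> carrier_mat (Suc N) (Suc N)"
  by (auto simp: block_diag_one_def)

lemma block_diag_one_one: "block_diag_one (1\<^sub>m N) = 1\<^sub>m (Suc N)"
  by (intro eq_matI) (auto simp: block_diag_one_def)

lemma block_diag_one_mult:
  fixes A B :: "'a :: semiring_1 mat"
  assumes A: "A \<in> carrier_mat N N" and B: "B \<in> carrier_mat N N"
  shows "block_diag_one A * block_diag_one B = block_diag_one (A * B)"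
proof (rule eq_matI)
  fix i j assume "i < dim_row (block_diag_one (A * B))" "j < dim_col (block_diag_one (A * B))"
  then have ij: "i < Suc N" "j < Suc N"
    using A B by (auto simp: block_diag_one_def)
  let ?A = "block_diag_one A" and ?B = "block_diag_one B"
  have "(?A * ?B) $$ (i, j) = (\<Sum>t<Suc N. ?A $$ (i, t) * ?B $$ (t, j))"
    using A B ij by (auto simp: block_diag_one_def scalar_prod_def lessThan_atLeast0 intro!: sum.cong)
  also have "\<dots> = ?A $$ (i, 0) * ?B $$ (0, j) + (\<Sum>t<N. ?A $$ (i, Suc t) * ?B $$ (Suc t, j))"
    by (rule sum.lessThan_Suc_shift)
  also have "\<dots> = block_diag_one (A * B) $$ (i, j)"
    using A B ij by (auto simp: block_diag_one_def scalar_prod_def lessThan_atLeast0 intro!: sum.cong)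
  finally show "(?A * ?B) $$ (i, j) = block_diag_one (A * B) $$ (i, j)" .
qed (use A B in \<open>auto simp: block_diag_one_def\<close>)

lemma Wmat_carrier [simp]: "Wmat N i y \<in> carrier_mat N N"
  by (simp add: Wmat_def)

lemma Wmat_dim [simp]: "dim_row (Wmat N i y) = N" "dim_col (Wmat N i y) = N"
  by (simp_all add: Wmat_def)

lemma PhiAux_carrier [simp]: "PhiAux N z p \<in> carrier_mat N N"
  by (induct p) (auto intro!: mult_carrier_mat[of _ N N])

lemma PhiAux_dim [simp]: "dim_row (PhiAux N z p) = N" "dim_col (PhiAux N z p) = N"
  using carrier_matD[OF PhiAux_carrier[of N z p]] by auto

lemma Wmat_Suc_block:
  "1 \<le> i \<Longrightarrow> Wmat (Suc N) (Suc i) y = block_diag_one (Wmat N i (\<lambda>k. y (Suc k)))"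
  by (intro eq_matI) (auto simp: Wmat_def block_diag_one_def Let_def)

lemma Wmat_cong: "(\<And>k. i \<le> k \<Longrightarrow> y k = y' k) \<Longrightarrow> Wmat N i y = Wmat N i y'"
  by (intro eq_matI) (auto simp: Wmat_def Let_def)

lemma Wargs_Suc_shift: "i \<le> k \<Longrightarrow> Wargs z (Suc i) (Suc k) = Wargs (shift_array 1 z) i k"
  by (auto simp: Wargs_def shift_array_def)

lemma PhiAux_Suc_block:
  "PhiAux (Suc N) z (Suc p) = block_diag_one (PhiAux N (shift_array 1 z) p) * Wmat (Suc N) 1 (Wargs z 1)"
proof (induct p)
  case 0
  then show ?case
    by (simp add: block_diag_one_one right_mult_one_mat[OF Wmat_carrier] left_mult_one_mat[OF Wmat_carrier])
next
  case (Suc p)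
  let ?W = "Wmat N (Suc p) (Wargs (shift_array 1 z) (Suc p))"
    and ?B = "PhiAux N (shift_array 1 z) p" and ?W1 = "Wmat (Suc N) 1 (Wargs z 1)"
  have "Wmat N (Suc p) (\<lambda>k. Wargs z (Suc (Suc p)) (Suc k)) = ?W"
    by (rule Wmat_cong) (simp add: Wargs_Suc_shift)
  then have "Wmat (Suc N) (Suc (Suc p)) (Wargs z (Suc (Suc p))) = block_diag_one ?W"
    by (simp add: Wmat_Suc_block)
  then have "PhiAux (Suc N) z (Suc (Suc p)) = block_diag_one ?W * (block_diag_one ?B * ?W1)"
    using Suc by simp
  also have "\<dots> = (block_diag_one ?W * block_diag_one ?B) * ?W1"
    by (rule assoc_mult_mat[symmetric]) auto
  also have "\<dots> = block_diag_one (PhiAux N (shift_array 1 z) (Suc p)) * ?W1"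
    by (simp add: block_diag_one_mult[of _ N])
  finally show ?case .
qed

lemma PhiAux_Suc_entry_first_row:
  assumes "b < Suc N"
  shows "PhiAux (Suc N) z (Suc p) $$ (0, b) = (if b = 0 then z 1 1 else 0)"
proof -
  let ?B = "PhiAux N (shift_array 1 z) p" and ?W = "Wmat (Suc N) 1 (Wargs z 1)"
  have "PhiAux (Suc N) z (Suc p) $$ (0, b) = (\<Sum>t<Suc N. block_diag_one ?B $$ (0, t) * ?W $$ (t, b))"
    unfolding PhiAux_Suc_block using assms
    by (auto simp: block_diag_one_def scalar_prod_def lessThan_atLeast0 intro!: sum.cong)
  also have "\<dots> = ?W $$ (0, b)"
    by (subst sum.lessThan_Suc_shift) (simp add: block_diag_one_def)
  finally show ?thesis
    using assms by (simp add: Wmat_def Wargs_def)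
qed

lemma PhiAux_Suc_entry_lower_rows:
  assumes a: "a < N" and b: "b < Suc N"
  shows "PhiAux (Suc N) z (Suc p) $$ (Suc a, b)
    = (if b < N then PhiAux N (shift_array 1 z) p $$ (a, b) else 0)
      + (if 0 < b then Wargs z 1 (Suc b) * PhiAux N (shift_array 1 z) p $$ (a, b - 1) else 0)"
proof -
  let ?B = "PhiAux N (shift_array 1 z) p" and ?W = "Wmat (Suc N) 1 (Wargs z 1)"
  have "PhiAux (Suc N) z (Suc p) $$ (Suc a, b) = (\<Sum>t<Suc N. block_diag_one ?B $$ (Suc a, t) * ?W $$ (t, b))"
    unfolding PhiAux_Suc_block using a b
    by (auto simp: block_diag_one_def scalar_prod_def lessThan_atLeast0 intro!: sum.cong)
  also have "\<dots> = (\<Sum>t<N. ?B $$ (a, t) * ?W $$ (Suc t, b))"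
    using a by (subst sum.lessThan_Suc_shift) (simp add: block_diag_one_def)
  also have "\<dots> = (\<Sum>t<N. (if t = b then ?B $$ (a, t) else 0)
                        + (if Suc t = b then Wargs z 1 (Suc b) * ?B $$ (a, t) else 0))"
    using b by (intro sum.cong refl) (auto simp: Wmat_def Let_def)
  also have "\<dots> = (if b < N then ?B $$ (a, b) else 0)
      + (if 0 < b then Wargs z 1 (Suc b) * ?B $$ (a, b - 1) else 0)"
    using b by (auto simp: sum.distrib sum.delta' sum_delta_Suc)
  finally show ?thesis .
qed

lemma PhiAux_Suc_entry:
  assumes a: "a < N" and b: "b < N"
  shows "PhiAux N z (Suc p) $$ (a, b)
    = (if a < p then 1 else Wargs z (Suc p) (Suc a)) * PhiAux N z p $$ (a, b)
      + (if p < a then PhiAux N z p $$ (a - 1, b) else 0)"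
proof -
  let ?P = "PhiAux N z p" and ?W = "Wmat N (Suc p) (Wargs z (Suc p))"
  have "PhiAux N z (Suc p) $$ (a, b) = (\<Sum>t<N. ?W $$ (a, t) * ?P $$ (t, b))"
    using a b by (auto simp: scalar_prod_def lessThan_atLeast0 intro!: sum.cong)
  also have "\<dots> = (\<Sum>t<N. (if t = a then (if a < p then 1 else Wargs z (Suc p) (Suc a)) * ?P $$ (t, b) else 0)
                        + (if Suc t = a then (if p < a then ?P $$ (t, b) else 0) else 0))"
    using a b by (intro sum.cong refl) (auto simp: Wmat_def Let_def)
  also have "\<dots> = (if a < p then 1 else Wargs z (Suc p) (Suc a)) * ?P $$ (a, b)
      + (if p < a then ?P $$ (a - 1, b) else 0)"
    using a by (auto simp: sum.distrib sum.delta' sum_delta_Suc)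
  finally show ?thesis .
qed

lemma prod_if_ratio_telescope:
  fixes f :: "nat \<Rightarrow> 'a :: field"
  assumes "s \<le> L" "\<And>j. s \<le> j \<Longrightarrow> j \<le> L \<Longrightarrow> f j \<noteq> 0"
  shows "(\<Prod>j<L. if j < s then 1 else f (Suc j) / f j) = f L / f s"
  using assms
proof (induct L)
  case 0
  then show ?case by simp
next
  case (Suc L)
  show ?case
  proof (cases "s = Suc L")
    case True
    then show ?thesis
      using Suc.prems by (subst prod.neutral) auto
  next
    case False
    then have "(\<Prod>j<L. if j < s then 1 else f (Suc j) / f j) = f L / f s" "f L \<noteq> 0"
      using Suc by auto
    then show ?thesis
      using False Suc.prems by simp
  qed
qed

lemma prod_Wargs_telescope:
  assumes "b < i" "i \<le> N" "\<And>j. i \<le> j \<Longrightarrow> j \<le> N \<Longrightarrow> z i j \<noteq> 0"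
  shows "(\<Prod>x<N - b. if Suc (b + x) < i then 1 else Wargs z i (Suc (b + x))) = z i N"
  using assms
proof (induct N)
  case 0
  then show ?case by simp
next
  case (Suc N)
  have Suc_diff: "Suc N - b = Suc (N - b)"
    using Suc.prems by simp
  show ?case
  proof (cases "i = Suc N")
    case True
    then have "(\<Prod>x<N - b. if Suc (b + x) < i then 1 else Wargs z i (Suc (b + x))) = 1"
      by (intro prod.neutral) auto
    then show ?thesis
      unfolding Suc_diff using True Suc.prems by (simp add: Wargs_def)
  next
    case False
    then have "i \<le> N"
      using Suc.prems by simp
    with Suc show ?thesis
      unfolding Suc_diff by (simp add: Wargs_def)
  qed
qed

lemma det_PhiAux_in_GT:
  assumes "q \<le> N" "in_GT q N z"
  shows "det (PhiAux N z q) = (\<Prod>i<q. z (Suc i) N)"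
proof -
  have det_Wmat: "det (Wmat N i y) = (\<Prod>r<N. if Suc r < i then 1 else y (Suc r))" for i y
    unfolding Wmat_def by (subst det_mat_lower_triangular) (auto simp: Let_def)
  have "det (PhiAux N z q) = (\<Prod>i<q. det (Wmat N (Suc i) (Wargs z (Suc i))))"
    by (induct q) (auto simp: det_mult[of _ N] lessThan_Suc mult.commute)
  also have "\<dots> = (\<Prod>i<q. z (Suc i) N)"
  proof (rule prod.cong[OF refl])
    fix i assume "i \<in> {..<q}"
    then have "(\<Prod>x<N - 0. if Suc (0 + x) < Suc i then 1 else Wargs z (Suc i) (Suc (0 + x))) = z (Suc i) N"
      using assms by (intro prod_Wargs_telescope) (auto simp: in_GT_def)
    then show "det (Wmat N (Suc i) (Wargs z (Suc i))) = z (Suc i) N"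
      by (simp add: det_Wmat cong: if_cong)
  qed
  finally show ?thesis .
qed

section \<open>Left-justified minors of \<open>\<Phi>\<close>\<close>

lemma subdet_PhiAux_Suc_initial_cols:
  assumes "\<And>i. i < k \<Longrightarrow> r i < N" "k \<le> N"
  shows "subdet (PhiAux (Suc N) z (Suc p)) k (\<lambda>i. Suc (r i)) (\<lambda>j. j)
       = subdet (PhiAux N (shift_array 1 z) p) k r (\<lambda>j. j)"
proof -
  let ?B = "PhiAux N (shift_array 1 z) p"
  have "subdet (PhiAux (Suc N) z (Suc p)) k (\<lambda>i. Suc (r i)) (\<lambda>j. j)
      = det (mat k k (\<lambda>(i, j). if 0 < j \<and> j < k then ?B $$ (r i, j) + Wargs z 1 (Suc j) * ?B $$ (r i, j - 1)
                                else ?B $$ (r i, j)))"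
    unfolding subdet_def using assms
    by (intro det_mat_cong) (auto simp: PhiAux_Suc_entry_lower_rows simp del: PhiAux.simps)
  also have "\<dots> = subdet ?B k r (\<lambda>j. j)"
    unfolding subdet_def by (rule det_mat_add_prev_columns)
  finally show ?thesis .
qed

text \<open>The 0-based column indices \<open>0, \<dots>, K - 2, K\<close>, i.e. the paper's columns
  \<open>[1, K - 1] \<union> {K + 1}\<close>.\<close>
definition skip_col :: "nat \<Rightarrow> nat \<Rightarrow> nat" where
  "skip_col K j = (if Suc j < K then j else K)"

lemma PhiAux_Suc_entry_skip_col:
  assumes "a < N" "j < K" "1 \<le> K" "K \<le> N"
  shows "PhiAux (Suc N) z (Suc p) $$ (Suc a, skip_col K j)
    = (if j = K - 1 then (if K < N then PhiAux N (shift_array 1 z) p $$ (a, K) else 0)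
                         + Wargs z 1 (Suc K) * PhiAux N (shift_array 1 z) p $$ (a, K - 1)
       else if 0 < j \<and> j < K - 1
       then PhiAux N (shift_array 1 z) p $$ (a, j) + Wargs z 1 (Suc j) * PhiAux N (shift_array 1 z) p $$ (a, j - 1)
       else PhiAux N (shift_array 1 z) p $$ (a, j))"
proof (cases "j = K - 1")
  case True
  then have "skip_col K j = K"
    using assms by (simp add: skip_col_def)
  with True assms show ?thesis
    by (simp add: PhiAux_Suc_entry_lower_rows del: PhiAux.simps)
next
  case False
  then have "skip_col K j = j" "j < N" "j < K - 1"
    using assms by (auto simp: skip_col_def)
  with False assms show ?thesis
    by (simp add: PhiAux_Suc_entry_lower_rows del: PhiAux.simps)
qed

lemma subdet_PhiAux_Suc_skip_col:
  assumes r: "\<And>i. i < K \<Longrightarrow> r i < N" and K: "1 \<le> K" "K \<le> N"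
  shows "subdet (PhiAux (Suc N) z (Suc p)) K (\<lambda>i. Suc (r i)) (skip_col K)
       = (if K < N then subdet (PhiAux N (shift_array 1 z) p) K r (skip_col K) else 0)
         + Wargs z 1 (Suc K) * subdet (PhiAux N (shift_array 1 z) p) K r (\<lambda>j. j)"
proof -
  let ?B = "PhiAux N (shift_array 1 z) p"
  let ?u = "\<lambda>i. if K < N then ?B $$ (r i, K) else 0"
  let ?X = "\<lambda>w i j. if j = K - 1 then w i else ?B $$ (r i, j)"
  let ?ops = "\<lambda>w. det (mat K K (\<lambda>(i, j).
      if 0 < j \<and> j < K - 1 then ?X w i j + Wargs z 1 (Suc j) * ?X w i (j - 1) else ?X w i j))"
  have ops: "?ops w = det (mat K K (\<lambda>(i, j). ?X w i j))" for w
    by (rule det_mat_add_prev_columns)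
  have last_col: "K - 1 < K"
    using K by simp
  have "subdet (PhiAux (Suc N) z (Suc p)) K (\<lambda>i. Suc (r i)) (skip_col K)
      = det (mat K K (\<lambda>(i, j). if j = K - 1 then 1 * ?u i + Wargs z 1 (Suc K) * ?B $$ (r i, K - 1)
           else if 0 < j \<and> j < K - 1 then ?B $$ (r i, j) + Wargs z 1 (Suc j) * ?B $$ (r i, j - 1)
           else ?B $$ (r i, j)))"
    unfolding subdet_def
    by (rule det_mat_cong) (simp only: PhiAux_Suc_entry_skip_col r K mult_1)
  also have "\<dots> = 1 * ?ops ?u + Wargs z 1 (Suc K) * ?ops (\<lambda>i. ?B $$ (r i, K - 1))"
    unfolding det_mat_linear_column[OF last_col]
    by (intro arg_cong2[where f = "(+)"] arg_cong2[where f = "(*)"] refl det_mat_cong) auto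
  also have "?ops ?u = (if K < N then subdet ?B K r (skip_col K) else 0)"
  proof (cases "K < N")
    case True
    then show ?thesis
      unfolding ops subdet_def by (simp, intro det_mat_cong) (auto simp: skip_col_def)
  next
    case False
    then show ?thesis
      unfolding ops using K by (subst det_mat_zero_column[of "K - 1"]) auto
  qed
  also have "?ops (\<lambda>i. ?B $$ (r i, K - 1)) = subdet ?B K r (\<lambda>j. j)"
    unfolding ops subdet_def by (rule det_mat_cong) auto
  finally show ?thesis by simp
qed

lemma subdet_PhiAux_Suc_consecutive_rows:
  assumes a: "a \<le> p" "a + k \<le> N" and c: "\<And>j. j < k \<Longrightarrow> c j < N"
  shows "subdet (PhiAux N z (Suc p)) k (\<lambda>i. a + i) c
       = (\<Prod>i<k. if a + i < p then 1 else Wargs z (Suc p) (Suc (a + i)))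
         * subdet (PhiAux N z p) k (\<lambda>i. a + i) c"
proof -
  let ?P = "PhiAux N z p"
  let ?d = "\<lambda>i. if a + i < p then 1 else Wargs z (Suc p) (Suc (a + i))"
  let ?T = "\<lambda>i t. (if t = i then ?d i else 0) + (if Suc t = i then (if p < a + i then 1 else 0) else 0)"
  have entry: "PhiAux N z (Suc p) $$ (a + i, c j) = (\<Sum>t<k. ?T i t * ?P $$ (a + t, c j))"
    if "i < k" "j < k" for i j
  proof -
    have "(\<Sum>t<k. ?T i t * ?P $$ (a + t, c j))
        = (\<Sum>t<k. if t = i then ?d i * ?P $$ (a + t, c j) else 0)
          + (\<Sum>t<k. if Suc t = i then (if p < a + i then ?P $$ (a + t, c j) else 0) else 0)"
      unfolding sum.distrib[symmetric] by (intro sum.cong refl) auto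
    also have "\<dots> = ?d i * ?P $$ (a + i, c j) + (if p < a + i then ?P $$ (a + i - 1, c j) else 0)"
      using that a by (auto simp: sum.delta' sum_delta_Suc)
    finally show ?thesis
      using that a c by (subst PhiAux_Suc_entry) auto
  qed
  have "subdet (PhiAux N z (Suc p)) k (\<lambda>i. a + i) c
      = det (mat k k (\<lambda>(i, j). \<Sum>t<k. ?T i t * ?P $$ (a + t, c j)))"
    unfolding subdet_def by (rule det_mat_cong) (simp add: entry del: PhiAux.simps)
  also have "\<dots> = det (mat k k (\<lambda>(i, j). ?T i j)) * subdet ?P k (\<lambda>i. a + i) c"
    unfolding subdet_def by (rule det_mat_sum_prod)
  also have "det (mat k k (\<lambda>(i, j). ?T i j)) = (\<Prod>i<k. ?d i)"
    by (subst det_mat_lower_triangular) auto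
  finally show ?thesis .
qed

lemma subdet_PhiAux_shift:
  assumes "a \<le> q" "a + K \<le> N" "\<And>i. i < K \<Longrightarrow> r i < N - a"
  shows "subdet (PhiAux N z q) K (\<lambda>i. a + r i) (\<lambda>j. j)
       = subdet (PhiAux (N - a) (shift_array a z) (q - a)) K r (\<lambda>j. j)"
  using assms
proof (induct a arbitrary: N z q)
  case 0
  then show ?case by simp
next
  case (Suc a)
  obtain N' q' where N: "N = Suc N'" and q: "q = Suc q'"
    using Suc.prems by (cases N; cases q) auto
  have "a + r i < N'" if "i < K" for i
    using Suc.prems(3)[OF that] N by simp
  then have "subdet (PhiAux N z q) K (\<lambda>i. Suc a + r i) (\<lambda>j. j)
      = subdet (PhiAux N' (shift_array 1 z) q') K (\<lambda>i. a + r i) (\<lambda>j. j)"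
    unfolding N q add_Suc by (rule subdet_PhiAux_Suc_initial_cols) (use Suc.prems N in auto)
  also have "\<dots> = subdet (PhiAux (N' - a) (shift_array a (shift_array 1 z)) (q' - a)) K r (\<lambda>j. j)"
    by (rule Suc.hyps) (use Suc.prems N q in auto)
  finally show ?case
    using N q by simp
qed

lemma subdet_PhiAux_solid:
  assumes "a \<le> q" "a + K \<le> N" "q = a \<or> N = a + K"
  shows "subdet (PhiAux N z q) K (\<lambda>i. a + i) (\<lambda>j. j) = det (PhiAux K (shift_array a z) (q - a))"
proof -
  have "subdet (PhiAux N z q) K (\<lambda>i. a + i) (\<lambda>j. j)
      = subdet (PhiAux (N - a) (shift_array a z) (q - a)) K (\<lambda>i. i) (\<lambda>j. j)"
    using subdet_PhiAux_shift[of a q K N "\<lambda>i. i" z] assms by simp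
  also have "\<dots> = det (PhiAux K (shift_array a z) (q - a))"
    using assms(3)
  proof
    assume "q = a"
    then have "subdet (PhiAux (N - a) (shift_array a z) (q - a)) K (\<lambda>i. i) (\<lambda>j. j) = det (1\<^sub>m K)"
      using assms unfolding subdet_def by (intro arg_cong[where f = det] eq_matI) auto
    with \<open>q = a\<close> show ?thesis
      by simp
  next
    assume "N = a + K"
    then show ?thesis
      by (simp add: subdet_full)
  qed
  finally show ?thesis .
qed

lemma subdet_one_skip_col:
  assumes "1 \<le> K" "K < N"
  shows "subdet (1\<^sub>m N) K (\<lambda>i. i) (skip_col K) = 0"
  unfolding subdet_def using assms by (subst det_mat_zero_column[of "K - 1"]) (auto simp: skip_col_def)

lemma subdet_PhiAux_skip_col:
  assumes "1 \<le> K" "K < N" "a + K \<le> N" "a \<le> q" "q = a \<or> N = a + K"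
  shows "subdet (PhiAux N z q) K (\<lambda>i. a + i) (skip_col K)
       = det (PhiAux K (shift_array a z) (q - a)) * (\<Sum>t<a. Wargs (shift_array t z) 1 (Suc K))"
  using assms
proof (induct a arbitrary: N z q)
  case 0
  then show ?case
    using subdet_one_skip_col by auto
next
  case (Suc a)
  obtain N' q' where N: "N = Suc N'" and q: "q = Suc q'"
    using Suc.prems by (cases N; cases q) auto
  let ?z = "shift_array 1 z" and ?D = "det (PhiAux K (shift_array (Suc a) z) (q - Suc a))"
  have "subdet (PhiAux N z q) K (\<lambda>i. Suc a + i) (skip_col K)
      = (if K < N' then subdet (PhiAux N' ?z q') K (\<lambda>i. a + i) (skip_col K) else 0)
        + Wargs z 1 (Suc K) * subdet (PhiAux N' ?z q') K (\<lambda>i. a + i) (\<lambda>j. j)"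
    unfolding N q add_Suc by (rule subdet_PhiAux_Suc_skip_col) (use Suc.prems N in auto)
  also have "subdet (PhiAux N' ?z q') K (\<lambda>i. a + i) (\<lambda>j. j) = ?D"
    using subdet_PhiAux_solid[where a = a and q = q' and K = K and N = N' and z = ?z] Suc.prems N q by auto
  also have "(if K < N' then subdet (PhiAux N' ?z q') K (\<lambda>i. a + i) (skip_col K) else 0)
      = ?D * (\<Sum>t<a. Wargs (shift_array (Suc t) z) 1 (Suc K))"
  proof (cases "K < N'")
    case True
    have "subdet (PhiAux N' ?z q') K (\<lambda>i. a + i) (skip_col K)
        = det (PhiAux K (shift_array a ?z) (q' - a)) * (\<Sum>t<a. Wargs (shift_array t ?z) 1 (Suc K))"
      by (rule Suc.hyps) (use True Suc.prems N q in auto)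
    then show ?thesis
      using True q by simp
  next
    case False
    then have "a = 0"
      using Suc.prems N by simp
    then show ?thesis
      using False by simp
  qed
  finally show ?case
    by (simp only: sum.lessThan_Suc_shift) (simp add: algebra_simps)
qed

lemma PhiAux_one_entry:
  assumes "a < N" "b < N"
  shows "PhiAux N z (Suc 0) $$ (a, b) = (if a = b then Wargs z 1 (Suc a) else if a = Suc b then 1 else 0)"
  using assms by (subst PhiAux_Suc_entry) (auto simp del: PhiAux.simps(2))

lemma subdet_PhiAux_skip_second_row:
  assumes "1 \<le> q"
  shows "subdet (PhiAux (Suc (Suc L)) w q) (Suc L) (\<lambda>i. if i = 0 then 0 else 1 + i) (\<lambda>j. j)
       = w 1 1 * subdet (PhiAux (Suc (Suc L)) w q) L (\<lambda>i. 2 + i) Suc"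
proof -
  obtain q' where q: "q = Suc q'"
    using assms by (cases q) auto
  show ?thesis
    unfolding subdet_def
  proof (subst det_mat_first_row_single)
    show "PhiAux (Suc (Suc L)) w q $$ (if 0 = 0 then 0 else 1 + 0, j) = (if j = 0 then w 1 1 else 0)"
      if "j < Suc L" for j
      using that unfolding q by (simp add: PhiAux_Suc_entry_first_row del: PhiAux.simps)
  qed (simp cong: if_cong)
qed

lemma subdet_PhiAux_one_lower_rows: "subdet (PhiAux (Suc (Suc L)) w 1) L (\<lambda>i. 2 + i) Suc = 1"
  unfolding subdet_def
  by (subst det_mat_upper_triangular) (auto simp: PhiAux_one_entry simp del: PhiAux.simps intro!: prod.neutral)

lemma subdet_PhiAux_lower_rows_peel:
  assumes "d + 2 \<le> Suc (Suc L)" "in_GT (d + 2) (Suc (Suc L)) w"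
  shows "subdet (PhiAux (Suc (Suc L)) w (d + 2)) L (\<lambda>i. 2 + i) Suc
       = (\<Prod>i<d. w (i + 3) (Suc (Suc L))) * subdet (PhiAux (Suc (Suc L)) w 2) L (\<lambda>i. 2 + i) Suc"
  using assms
proof (induct d)
  case 0
  then show ?case by (simp add: numeral_2_eq_2 del: PhiAux.simps)
next
  case (Suc d)
  let ?N = "Suc (Suc L)"
  have "subdet (PhiAux ?N w (Suc (d + 2))) L (\<lambda>i. 2 + i) Suc
      = (\<Prod>i<L. if 2 + i < d + 2 then 1 else Wargs w (Suc (d + 2)) (Suc (2 + i)))
        * subdet (PhiAux ?N w (d + 2)) L (\<lambda>i. 2 + i) Suc"
    by (rule subdet_PhiAux_Suc_consecutive_rows) (use Suc.prems in auto)
  also have "(\<Prod>i<L. if 2 + i < d + 2 then 1 else Wargs w (Suc (d + 2)) (Suc (2 + i))) = w (d + 3) ?N"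
  proof -
    have "(\<Prod>x<?N - 2. if Suc (2 + x) < Suc (d + 2) then 1 else Wargs w (Suc (d + 2)) (Suc (2 + x)))
        = w (Suc (d + 2)) ?N"
      by (rule prod_Wargs_telescope) (use Suc.prems in \<open>auto simp: in_GT_def\<close>)
    then show ?thesis
      by (simp add: numeral_3_eq_3 cong: if_cong)
  qed
  also have "subdet (PhiAux ?N w (d + 2)) L (\<lambda>i. 2 + i) Suc
      = (\<Prod>i<d. w (i + 3) ?N) * subdet (PhiAux ?N w 2) L (\<lambda>i. 2 + i) Suc"
    by (rule Suc.hyps) (use Suc.prems in \<open>auto simp: in_GT_def\<close>)
  finally show ?case
    by (simp add: lessThan_Suc algebra_simps)
qed

text \<open>With only \<open>W\<^sup>2 W\<^sup>1\<close> left, each column of the minor combines two adjacent columns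
  of the bidiagonal matrix \<open>W\<^sup>1\<close> of the shifted array.\<close>
lemma subdet_PhiAux_two_lower_rows:
  "subdet (PhiAux (Suc (Suc L)) w 2) L (\<lambda>i. 2 + i) Suc
   = (\<Sum>s\<le>L. (\<Prod>j<s. Wargs w 1 (Suc (Suc j)))
             * (\<Prod>j<L. if j < s then 1 else Wargs (shift_array 1 w) 1 (Suc (Suc j))))"
proof -
  let ?B = "PhiAux (Suc L) (shift_array 1 w) 1"
  let ?X = "\<lambda>i j. ?B $$ (Suc i, j)"
  let ?\<alpha> = "\<lambda>j. Wargs w 1 (Suc (Suc j))"
  let ?g = "\<lambda>j. Wargs (shift_array 1 w) 1 (Suc (Suc j))"
  have blocks: "det (mat L L (\<lambda>(i, j). if j < L then ?X i (if j < s then j else Suc j) else 0))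
      = (\<Prod>j<L. if j < s then 1 else ?g j)" for s
  proof -
    have "det (mat L L (\<lambda>(i, j). if j < L then ?X i (if j < s then j else Suc j) else 0))
        = det (mat L L (\<lambda>(i, j). if j < s then (if i = j then 1 else if Suc i = j then ?g i else 0)
                                  else (if i = j then ?g i else if i = Suc j then 1 else 0)))"
      by (rule det_mat_cong) (auto simp: PhiAux_one_entry simp del: PhiAux.simps)
    also have "\<dots> = (\<Prod>j<L. if j < s then 1 else ?g j)"
      by (rule det_mat_bidiagonal_blocks)
    finally show ?thesis .
  qed
  have "subdet (PhiAux (Suc (Suc L)) w 2) L (\<lambda>i. 2 + i) Suc
      = det (mat L L (\<lambda>(i, j). if j < L then ?\<alpha> j * ?X i j + 1 * ?X i (Suc j) else 0))"
    unfolding subdet_def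
  proof (rule det_mat_cong)
    fix i j assume ij: "i < L" "j < L"
    have "PhiAux (Suc (Suc L)) w (Suc 1) $$ (Suc (Suc i), Suc j) = ?X i (Suc j) + ?\<alpha> j * ?X i j"
      using ij by (subst PhiAux_Suc_entry_lower_rows) (auto simp del: PhiAux.simps)
    then show "PhiAux (Suc (Suc L)) w 2 $$ (2 + i, Suc j)
        = (if j < L then ?\<alpha> j * ?X i j + 1 * ?X i (Suc j) else 0)"
      using ij by (simp add: numeral_2_eq_2 del: PhiAux.simps)
  qed
  also have "\<dots> = (\<Sum>s\<le>L. ((\<Prod>j<s. ?\<alpha> j) * (\<Prod>j\<in>{s..<L}. 1))
      * det (mat L L (\<lambda>(i, j). if j < L then ?X i (if j < s then j else Suc j) else 0)))"
    by (rule det_mat_adjacent_column_combination) simp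
  also have "\<dots> = (\<Sum>s\<le>L. (\<Prod>j<s. ?\<alpha> j) * (\<Prod>j<L. if j < s then 1 else ?g j))"
    by (intro sum.cong refl) (simp add: blocks)
  finally show ?thesis .
qed

lemma subdet_PhiAux_skip_row:
  assumes q: "2 \<le> q" "q \<le> Suc (Suc L)" and w: "in_GT q (Suc (Suc L)) w"
  shows "subdet (PhiAux (Suc (Suc L)) w q) (Suc L) (\<lambda>i. if i = 0 then 0 else 1 + i) (\<lambda>j. j)
       = (\<Prod>i<q - 1. w (i + 2) (Suc (Suc L))) * (\<Sum>s\<le>L. w 1 (Suc s) / w 2 (s + 2))"
proof -
  obtain d where d: "q = d + 2"
    using q by (metis add.commute le_Suc_ex)
  let ?N = "Suc (Suc L)"
  have nz: "w i j \<noteq> 0" if "1 \<le> i" "i \<le> q" "i \<le> j" "j \<le> ?N" for i j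
    using w that by (auto simp: in_GT_def)
  have alpha: "(\<Prod>j<s. Wargs w 1 (Suc (Suc j))) = w 1 (Suc s) / w 1 1" if "s \<le> L" for s
    using prod_if_ratio_telescope[of 0 s "\<lambda>j. w 1 (Suc j)"] nz q that by (simp add: Wargs_def)
  have beta: "(\<Prod>j<L. if j < s then 1 else Wargs (shift_array 1 w) 1 (Suc (Suc j)))
      = w 2 ?N / w 2 (s + 2)" if "s \<le> L" for s
    using prod_if_ratio_telescope[of s L "\<lambda>j. w 2 (j + 2)"] nz q that
    by (simp add: Wargs_def shift_array_def numeral_2_eq_2 numeral_3_eq_3 cong: if_cong)
  have "subdet (PhiAux ?N w q) (Suc L) (\<lambda>i. if i = 0 then 0 else 1 + i) (\<lambda>j. j)
      = w 1 1 * subdet (PhiAux ?N w q) L (\<lambda>i. 2 + i) Suc"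
    by (rule subdet_PhiAux_skip_second_row) (use q in auto)
  also have "subdet (PhiAux ?N w q) L (\<lambda>i. 2 + i) Suc
      = (\<Prod>i<d. w (i + 3) ?N) * subdet (PhiAux ?N w 2) L (\<lambda>i. 2 + i) Suc"
    unfolding d by (rule subdet_PhiAux_lower_rows_peel) (use q w d in auto)
  also have "subdet (PhiAux ?N w 2) L (\<lambda>i. 2 + i) Suc
      = w 2 ?N / w 1 1 * (\<Sum>s\<le>L. w 1 (Suc s) / w 2 (s + 2))"
    unfolding subdet_PhiAux_two_lower_rows sum_distrib_left
    by (intro sum.cong refl) (simp only: atMost_iff alpha beta, simp)
  also have "w 1 1 * ((\<Prod>i<d. w (i + 3) ?N) * (w 2 ?N / w 1 1 * (\<Sum>s\<le>L. w 1 (Suc s) / w 2 (s + 2))))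
      = (w 2 ?N * (\<Prod>i<d. w (i + 3) ?N)) * (\<Sum>s\<le>L. w 1 (Suc s) / w 2 (s + 2))"
    using nz[of 1 1] q by simp
  also have "w 2 ?N * (\<Prod>i<d. w (i + 3) ?N) = (\<Prod>i<q - 1. w (i + 2) ?N)"
  proof -
    have "q - 1 = Suc d"
      using d by simp
    then show ?thesis
      by (simp only: prod.lessThan_Suc_shift) (simp add: numeral_3_eq_3 numeral_2_eq_2)
  qed
  finally show ?thesis .
qed

section \<open>The minors of the decoration formula\<close>

lemma image_pred_atLeastAtMost: "(\<lambda>x. x - 1) ` {a + 1..b} = {a..<(b :: nat)}"
  by (auto simp: image_iff intro!: bexI[where x = "Suc _"])

lemma image_pred_atLeastAtMost_1: "(\<lambda>x. x - 1) ` {1..b} = {..<(b :: nat)}"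
  using image_pred_atLeastAtMost[of 0 b] by (simp add: lessThan_atLeast0)

lemma image_add_lessThan: "(\<lambda>i. a + i) ` {..<K} = {a..<a + (K :: nat)}"
  by (simp add: lessThan_atLeast0 add.commute)

lemma image_skip_col:
  assumes "1 \<le> K"
  shows "skip_col K ` {..<K} = {..<K - 1} \<union> {K}"
proof -
  have "{..<K} = {..<K - 1} \<union> {K - 1}"
    using assms by auto
  moreover have "skip_col K ` {..<K - 1} = {..<K - 1}"
    by (rule image_cong[of _ _ _ "\<lambda>j. j", simplified]) (auto simp: skip_col_def)
  ultimately show ?thesis
    using assms by (simp add: skip_col_def)
qed

lemma image_pred_skip_col:
  "(\<lambda>x. x - 1) ` ({1..K - 1} \<union> {K + 1}) = {..<K - 1} \<union> {(K :: nat)}"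
  unfolding image_Un image_pred_atLeastAtMost_1 by simp

lemma image_skip_row:
  fixes K :: nat
  assumes "1 \<le> K"
  shows "(\<lambda>i. a + (if i = 0 then 0 else 1 + i)) ` {..<K} = {a} \<union> {a + 2..<a + 1 + K}"
proof -
  have "{..<K} = insert 0 {1..<K}"
    using assms by (auto intro: gr0I)
  moreover have "(\<lambda>i. a + (if i = 0 then 0 else 1 + i)) ` {1..<K} = {1 + Suc a..<K + Suc a}"
  proof -
    have "(\<lambda>i. a + (if i = 0 then 0 else 1 + i)) ` {1..<K} = (\<lambda>i. i + Suc a) ` {1..<K}"
      by (rule image_cong) auto
    then show ?thesis
      by (simp only: image_add_atLeastLessThan')
  qed
  ultimately show ?thesis
    by (simp add: add.commute)
qed

lemma image_pred_skip_row:
  "1 \<le> k \<Longrightarrow> (\<lambda>x. x - 1) ` ({k} \<union> {k + 2..n}) = {k - 1} \<union> {k + 1..<(n :: nat)}"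
  using image_pred_atLeastAtMost[of "k + 1" n] by auto

lemma minor_consecutive_rows:
  assumes "M \<in> carrier_mat n n" "a + K \<le> n"
  shows "minor M {a + 1..a + K} {1..K} = subdet M K (\<lambda>i. a + i) (\<lambda>j. j)"
proof (rule minor_eq_subdet[OF assms(1)])
  show "(\<lambda>x. x - 1) ` {a + 1..a + K} = (\<lambda>i. a + i) ` {..<K}"
    by (simp only: image_pred_atLeastAtMost image_add_lessThan)
  show "(\<lambda>x. x - 1) ` {1..K} = (\<lambda>j. j) ` {..<K}"
    by (simp only: image_pred_atLeastAtMost_1 image_ident)
qed (use assms in auto)

lemma minor_consecutive_rows_skip_col:
  assumes "M \<in> carrier_mat n n" "a + K \<le> n" "1 \<le> K" "K < n"
  shows "minor M {a + 1..a + K} ({1..K - 1} \<union> {K + 1}) = subdet M K (\<lambda>i. a + i) (skip_col K)"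
proof (rule minor_eq_subdet[OF assms(1)])
  show "(\<lambda>x. x - 1) ` {a + 1..a + K} = (\<lambda>i. a + i) ` {..<K}"
    by (simp only: image_pred_atLeastAtMost image_add_lessThan)
  show "(\<lambda>x. x - 1) ` ({1..K - 1} \<union> {K + 1}) = skip_col K ` {..<K}"
    using assms(3) by (simp only: image_pred_skip_col image_skip_col)
qed (use assms in \<open>auto simp: skip_col_def\<close>)

lemma minor_skip_row_first_cols:
  assumes "M \<in> carrier_mat n n" "1 \<le> k" "k < n"
  shows "minor M ({k} \<union> {k + 2..n}) {1..n - k}
       = subdet M (n - k) (\<lambda>i. k - 1 + (if i = 0 then 0 else 1 + i)) (\<lambda>j. j)"
proof (rule minor_eq_subdet[OF assms(1)])
  have "{k - 1 + 2..<k - 1 + 1 + (n - k)} = {k + 1..<n}"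
    using assms by auto
  then show "(\<lambda>x. x - 1) ` ({k} \<union> {k + 2..n})
      = (\<lambda>i. k - 1 + (if i = 0 then 0 else 1 + i)) ` {..<n - k}"
    using assms by (simp only: image_pred_skip_row image_skip_row)
  show "(\<lambda>x. x - 1) ` {1..n - k} = (\<lambda>j. j) ` {..<n - k}"
    by (simp only: image_pred_atLeastAtMost_1 image_ident)
qed (use assms in auto)

lemma minor_Phi_solid:
  assumes z: "in_GT m n z" and a: "a \<le> min m n" "a + K \<le> n" "a = min m n \<or> a + K = n"
  shows "minor (Phi m n z) {a + 1..a + K} {1..K} = (\<Prod>i<min m n - a. z (a + i + 1) (a + K))"
proof -
  let ?p = "min m n"
  have "minor (Phi m n z) {a + 1..a + K} {1..K} = det (PhiAux K (shift_array a z) (?p - a))"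
    unfolding Phi_def minor_consecutive_rows[OF PhiAux_carrier a(2)]
    by (rule subdet_PhiAux_solid) (use a in auto)
  also have "\<dots> = (\<Prod>i<?p - a. shift_array a z (Suc i) K)"
  proof (rule det_PhiAux_in_GT)
    show "?p - a \<le> K"
      using a by auto
    have "in_GT (?p - a) (n - a) (shift_array a z)"
      by (rule in_GT_shift_array, rule in_GT_mono[OF z]) auto
    then show "in_GT (?p - a) K (shift_array a z)"
      by (rule in_GT_mono) (use a in auto)
  qed
  finally show ?thesis
    by (simp add: shift_array_def)
qed

lemma minor_Phi_solid_nonzero:
  assumes z: "in_GT m n z" and a: "a \<le> min m n" "a + K \<le> n" "a = min m n \<or> a + K = n"
  shows "minor (Phi m n z) {a + 1..a + K} {1..K} \<noteq> 0"
proof -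
  have "z (a + i + 1) (a + K) \<noteq> 0" if "i < min m n - a" for i
  proof -
    have "a + i + 1 \<le> m" "i < K"
      using that a by auto
    then show ?thesis
      using z a unfolding in_GT_def by auto
  qed
  then show ?thesis
    unfolding minor_Phi_solid[OF assms] by simp
qed

lemma Phi_skip_col_ratio:
  assumes z: "in_GT m n z" and K: "1 \<le> K" "K < n"
    and a: "a \<le> min m n" "a + K \<le> n" "a = min m n \<or> a + K = n"
  shows "minor (Phi m n z) {a + 1..a + K} ({1..K - 1} \<union> {K + 1}) / minor (Phi m n z) {a + 1..a + K} {1..K}
       = (\<Sum>t<a. z (t + 1) (t + K + 1) / z (t + 1) (t + K))"
proof -
  let ?p = "min m n"
  have "subdet (PhiAux n z ?p) K (\<lambda>i. a + i) (skip_col K)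
      = det (PhiAux K (shift_array a z) (?p - a)) * (\<Sum>t<a. Wargs (shift_array t z) 1 (Suc K))"
    by (rule subdet_PhiAux_skip_col) (use a K in auto)
  moreover have "subdet (PhiAux n z ?p) K (\<lambda>i. a + i) (\<lambda>j. j) = det (PhiAux K (shift_array a z) (?p - a))"
    by (rule subdet_PhiAux_solid) (use a in auto)
  ultimately have "minor (Phi m n z) {a + 1..a + K} ({1..K - 1} \<union> {K + 1})
      = minor (Phi m n z) {a + 1..a + K} {1..K} * (\<Sum>t<a. Wargs (shift_array t z) 1 (Suc K))"
    unfolding Phi_def minor_consecutive_rows[OF PhiAux_carrier a(2)]
      minor_consecutive_rows_skip_col[OF PhiAux_carrier a(2) K] by simp
  moreover have "Wargs (shift_array t z) 1 (Suc K) = z (t + 1) (t + K + 1) / z (t + 1) (t + K)" for t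
    using K by (simp add: Wargs_def shift_array_def)
  ultimately show ?thesis
    using minor_Phi_solid_nonzero[OF z a] by simp
qed

lemma Phi_skip_row_ratio:
  assumes z: "in_GT m n z" and k: "1 \<le> k" "k < min m n"
  shows "minor (Phi m n z) ({k} \<union> {k + 2..n}) {1..n - k} / minor (Phi m n z) {k + 1..n} {1..n - k}
       = (\<Sum>s\<le>n - k - 1. z k (k + s) / z (k + 1) (k + s + 1))"
proof -
  obtain L where L: "n - k = Suc L"
    using k by (metis Suc_diff_Suc min_less_iff_conj)
  let ?p = "min m n" and ?L = L and ?w = "shift_array (k - 1) z"
  have idx: "n - (k - 1) = Suc (Suc ?L)" "n - k = Suc ?L" "k + (n - k) = n" "?p - (k - 1) - 1 = ?p - k"
    "\<And>i. k - 1 + (i + 2) = k + i + 1" "k - 1 + Suc (Suc ?L) = n"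
    "\<And>s. k - 1 + Suc s = k + s" "k - 1 + 1 = k" "k - 1 + 2 = k + 1" "\<And>s. k - 1 + (s + 2) = k + s + 1"
    "Suc (k + L) = n"
    using k L by auto
  have w: "in_GT (?p - (k - 1)) (Suc (Suc ?L)) ?w"
    using in_GT_shift_array[OF in_GT_mono[OF z, of ?p n], of "k - 1"] idx by simp
  have "minor (Phi m n z) ({k} \<union> {k + 2..n}) {1..n - k}
      = subdet (PhiAux n z ?p) (n - k) (\<lambda>i. k - 1 + (if i = 0 then 0 else 1 + i)) (\<lambda>j. j)"
    unfolding Phi_def using k by (intro minor_skip_row_first_cols) auto
  also have "\<dots> = subdet (PhiAux (n - (k - 1)) ?w (?p - (k - 1))) (n - k) (\<lambda>i. if i = 0 then 0 else 1 + i) (\<lambda>j. j)"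
    by (rule subdet_PhiAux_shift) (use k in auto)
  also have "\<dots> = (\<Prod>i<?p - (k - 1) - 1. ?w (i + 2) (Suc (Suc ?L))) * (\<Sum>s\<le>?L. ?w 1 (Suc s) / ?w 2 (s + 2))"
    unfolding idx(1,2) by (rule subdet_PhiAux_skip_row) (use k w L in auto)
  also have "(\<Prod>i<?p - (k - 1) - 1. ?w (i + 2) (Suc (Suc ?L))) = minor (Phi m n z) {k + 1..n} {1..n - k}"
    using minor_Phi_solid[OF z, of k "n - k"] k by (simp only: shift_array_def idx) (simp add: idx)
  also have "(\<Sum>s\<le>?L. ?w 1 (Suc s) / ?w 2 (s + 2)) = (\<Sum>s\<le>n - k - 1. z k (k + s) / z (k + 1) (k + s + 1))"
    by (simp only: shift_array_def idx diff_Suc_1)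
  finally show ?thesis
    using minor_Phi_solid_nonzero[OF z, of k "n - k"] k by (simp add: idx(3))
qed

lemma Phi_skip_row_last_ratio:
  assumes "1 \<le> m" "m < n"
  shows "minor (Phi m n z) ({m} \<union> {m + 2..n}) {1..n - m} / minor (Phi m n z) {m + 1..n} {1..n - m} = z m m"
proof -
  obtain L where L: "n - m = Suc L"
    using assms by (metis Suc_diff_Suc)
  let ?L = L and ?w = "shift_array (m - 1) z"
  have idx: "n - (m - 1) = Suc (Suc ?L)" "n - m = Suc ?L" "min m n = m" "m - (m - 1) = 1" "m + (n - m) = n"
    using assms L by auto
  have "minor (Phi m n z) ({m} \<union> {m + 2..n}) {1..n - m}
      = subdet (PhiAux n z m) (n - m) (\<lambda>i. m - 1 + (if i = 0 then 0 else 1 + i)) (\<lambda>j. j)"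
    unfolding Phi_def idx(3) using assms by (intro minor_skip_row_first_cols) auto
  also have "\<dots> = subdet (PhiAux (n - (m - 1)) ?w (m - (m - 1))) (n - m) (\<lambda>i. if i = 0 then 0 else 1 + i) (\<lambda>j. j)"
    by (rule subdet_PhiAux_shift) (use assms in auto)
  also have "\<dots> = ?w 1 1 * subdet (PhiAux (Suc (Suc ?L)) ?w 1) ?L (\<lambda>i. 2 + i) Suc"
    unfolding idx(1,2,4) by (rule subdet_PhiAux_skip_second_row) simp
  also have "\<dots> = z m m"
    unfolding subdet_PhiAux_one_lower_rows using assms by (simp add: shift_array_def)
  finally have "minor (Phi m n z) ({m} \<union> {m + 2..n}) {1..n - m} = z m m" .
  moreover have "minor (Phi m n z) {m + 1..m + (n - m)} {1..n - m}
      = subdet (PhiAux n z m) (n - m) (\<lambda>i. m + i) (\<lambda>j. j)"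
    unfolding Phi_def idx(3) by (rule minor_consecutive_rows) (use assms in auto)
  moreover have "subdet (PhiAux n z m) (n - m) (\<lambda>i. m + i) (\<lambda>j. j) = det (PhiAux (n - m) (shift_array m z) (m - m))"
    by (rule subdet_PhiAux_solid) (use assms in auto)
  ultimately show ?thesis
    by (simp add: idx(5))
qed

section \<open>Reindexing the decoration\<close>

lemma sum_triangle_rows:
  fixes m n :: nat
  shows   "(\<Sum>i = 1..m - 1. \<Sum>j = i..n - 1. g i j) = (\<Sum>k = 1..min (m - 1) (n - 1). \<Sum>s\<le>n - k - 1. g k (k + s))"
proof -
  have "(\<Sum>i = 1..m - 1. \<Sum>j = i..n - 1. g i j) = (\<Sum>i = 1..min (m - 1) (n - 1). \<Sum>j = i..n - 1. g i j)"
    by (rule sum.mono_neutral_right) auto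
  also have "\<dots> = (\<Sum>k = 1..min (m - 1) (n - 1). \<Sum>s\<le>n - k - 1. g k (k + s))"
  proof (rule sum.cong[OF refl])
    fix k assume "k \<in> {1..min (m - 1) (n - 1)}"
    then show "(\<Sum>j = k..n - 1. g k j) = (\<Sum>s\<le>n - k - 1. g k (k + s))"
      by (intro sum.reindex_bij_witness[of _ "\<lambda>s. k + s" "\<lambda>j. j - k"]) auto
  qed
  finally show ?thesis .
qed

lemma sum_triangle_diagonals:
  fixes m n :: nat
  shows   "(\<Sum>i = 1..m. \<Sum>j = i..n - 1. f i j) = (\<Sum>d<n - 1. \<Sum>t<min m (n - 1 - d). f (t + 1) (t + 1 + d))"
proof -
  have "(\<Sum>i = 1..m. \<Sum>j = i..n - 1. f i j) = (\<Sum>(i, j) \<in> Sigma {1..m} (\<lambda>i. {i..n - 1}). f i j)"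
    by (rule sum.Sigma) auto
  also have "\<dots> = (\<Sum>(d, t) \<in> Sigma {..<n - 1} (\<lambda>d. {..<min m (n - 1 - d)}). f (t + 1) (t + 1 + d))"
    by (rule sum.reindex_bij_witness[of _ "\<lambda>(d, t). (t + 1, t + 1 + d)" "\<lambda>(i, j). (j - i, i - 1)"]) auto
  also have "\<dots> = (\<Sum>d<n - 1. \<Sum>t<min m (n - 1 - d). f (t + 1) (t + 1 + d))"
    by (rule sum.Sigma[symmetric]) auto
  finally show ?thesis .
qed

lemma sum_triangle_diagonals_split:
  fixes m n :: nat
  assumes "1 \<le> m"
  shows "(\<Sum>i = 1..m. \<Sum>j = i..n - 1. f i j)
    = (\<Sum>k = 1..min (m - 1) (n - 1). \<Sum>t<k. f (t + 1) (t + (n - k)))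
      + (if m < n then (\<Sum>j = 1..n - m. \<Sum>t<m. f (t + 1) (t + j)) else 0)"
proof -
  let ?T = "\<lambda>d. \<Sum>t<min m (n - 1 - d). f (t + 1) (t + 1 + d)"
  define c where "c = n - 1 - min (m - 1) (n - 1)"
  have "c \<le> n - 1"
    by (simp add: c_def)
  then have "(\<Sum>d<n - 1. ?T d) = (\<Sum>d = 0..<c. ?T d) + (\<Sum>d = c..<n - 1. ?T d)"
    unfolding lessThan_atLeast0 by (simp add: sum.atLeastLessThan_concat)
  also have "(\<Sum>d = c..<n - 1. ?T d) = (\<Sum>k = 1..min (m - 1) (n - 1). \<Sum>t<k. f (t + 1) (t + (n - k)))"
  proof (rule sum.reindex_bij_witness[of _ "\<lambda>k. n - 1 - k" "\<lambda>d. n - 1 - d"])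
    fix d assume "d \<in> {c..<n - 1}"
    then have "min m (n - 1 - d) = n - 1 - d" "\<And>t. t + (n - (n - 1 - d)) = t + 1 + d"
      using assms by (auto simp: c_def)
    then show "(\<Sum>t<n - 1 - d. f (t + 1) (t + (n - (n - 1 - d)))) = ?T d"
      by simp
  qed (auto simp: c_def)
  also have "(\<Sum>d = 0..<c. ?T d) = (if m < n then (\<Sum>j = 1..n - m. \<Sum>t<m. f (t + 1) (t + j)) else 0)"
  proof (cases "m < n")
    case True
    then have "c = n - m"
      using assms by (simp add: c_def)
    then have "(\<Sum>d = 0..<c. ?T d) = (\<Sum>d = 0..<n - m. \<Sum>t<m. f (t + 1) (t + 1 + d))"
      by (intro sum.cong refl) (auto simp: min_def)
    also have "\<dots> = (\<Sum>j = 1..n - m. \<Sum>t<m. f (t + 1) (t + j))"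
      by (rule sum.reindex_bij_witness[of _ "\<lambda>j. j - 1" "\<lambda>d. d + 1"]) auto
    finally show ?thesis
      using True by simp
  next
    case False
    then show ?thesis
      by (simp add: c_def)
  qed
  finally show ?thesis
    unfolding sum_triangle_diagonals by (simp only: add.commute)
qed


lemma sum_Phi_skip_row_skip_col_ratios:
  assumes z: "in_GT m n z"
  shows "(\<Sum>k = 1..min (m - 1) (n - 1).
         (minor (Phi m n z) ({k} \<union> {k + 2..n}) {1..n - k}
          + minor (Phi m n z) {k + 1..n} ({1..n - k - 1} \<union> {n - k + 1}))
         / minor (Phi m n z) {k + 1..n} {1..n - k})
    = (\<Sum>k = 1..min (m - 1) (n - 1). \<Sum>s\<le>n - k - 1. z k (k + s) / z (k + 1) (k + s + 1))
      + (\<Sum>k = 1..min (m - 1) (n - 1). \<Sum>t<k. z (t + 1) (t + (n - k) + 1) / z (t + 1) (t + (n - k)))"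
  unfolding sum.distrib[symmetric]
proof (rule sum.cong[OF refl])
  fix k assume "k \<in> {1..min (m - 1) (n - 1)}"
  then have k: "1 \<le> k" "k < min m n" "1 \<le> n - k" "n - k < n" "k \<le> min m n" "k + (n - k) = n"
    by auto
  show "(minor (Phi m n z) ({k} \<union> {k + 2..n}) {1..n - k}
          + minor (Phi m n z) {k + 1..n} ({1..n - k - 1} \<union> {n - k + 1}))
         / minor (Phi m n z) {k + 1..n} {1..n - k}
      = (\<Sum>s\<le>n - k - 1. z k (k + s) / z (k + 1) (k + s + 1))
        + (\<Sum>t<k. z (t + 1) (t + (n - k) + 1) / z (t + 1) (t + (n - k)))"
    using Phi_skip_row_ratio[OF z k(1,2)] Phi_skip_col_ratio[OF z k(3,4,5)] k(6)
    by (simp add: add_divide_distrib)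
qed

lemma sum_Phi_lower_skip_col_ratios:
  assumes z: "in_GT m n z" and "1 \<le> m" "m < n"
  shows "(\<Sum>j = 1..n - m. minor (Phi m n z) {m + 1..m + j} ({1..j - 1} \<union> {j + 1})
                            / minor (Phi m n z) {m + 1..m + j} {1..j})
    = (\<Sum>j = 1..n - m. \<Sum>t<m. z (t + 1) (t + j + 1) / z (t + 1) (t + j))"
proof (rule sum.cong[OF refl])
  fix j assume "j \<in> {1..n - m}"
  then have j: "1 \<le> j" "j < n" "m \<le> min m n" "m + j \<le> n" "m = min m n \<or> m + j = n"
    using assms by auto
  show "minor (Phi m n z) {m + 1..m + j} ({1..j - 1} \<union> {j + 1}) / minor (Phi m n z) {m + 1..m + j} {1..j}
      = (\<Sum>t<m. z (t + 1) (t + j + 1) / z (t + 1) (t + j))"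
    using Phi_skip_col_ratio[OF z j] by simp
qed

theorem lemma3p9:
  fixes m n :: nat and z :: "nat \<Rightarrow> nat \<Rightarrow> complex"
  assumes "1 \<le> m" and "1 \<le> n" and "in_GT m n z"
  shows "decoration m n z =
    (let M = Phi m n z in
      (\<Sum>k = 1..min (m - 1) (n - 1).
         (minor M ({k} \<union> {k + 2..n}) {1..n - k}
          + minor M {k + 1..n} ({1..n - k - 1} \<union> {n - k + 1}))
         / minor M {k + 1..n} {1..n - k})
      + (if m < n then
           minor M ({m} \<union> {m + 2..n}) {1..n - m} / minor M {m + 1..n} {1..n - m}
           + (\<Sum>j = 1..n - m. minor M {m + 1..m + j} ({1..j - 1} \<union> {j + 1})
                               / minor M {m + 1..m + j} {1..j})
         else 0))"
proof -
  have "decoration m n z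
      = (\<Sum>k = 1..min (m - 1) (n - 1). \<Sum>s\<le>n - k - 1. z k (k + s) / z (k + 1) (k + s + 1))
        + ((\<Sum>k = 1..min (m - 1) (n - 1). \<Sum>t<k. z (t + 1) (t + (n - k) + 1) / z (t + 1) (t + (n - k)))
           + (if m < n then \<Sum>j = 1..n - m. \<Sum>t<m. z (t + 1) (t + j + 1) / z (t + 1) (t + j) else 0))
        + (if m < n then z m m else 0)"
    unfolding decoration_def sum_triangle_rows sum_triangle_diagonals_split[OF assms(1)]
    by (simp only: add.commute)
  then show ?thesis
    unfolding Let_def sum_Phi_skip_row_skip_col_ratios[OF assms(3)]
    using sum_Phi_lower_skip_col_ratios[OF assms(3,1)] Phi_skip_row_last_ratio[OF assms(1)]
    by (simp add: algebra_simps)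
qed

end
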